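(* Under the setup below, for every $1\le i\le n-1$ and $1\le j\le D_i$, put $r_i=(d_i/d_{i+1})^{1/D_i}$ and $\widetilde w_{i,j}=r_ia_i\exp\!\big(\pi\mathrm{i}\tfrac{2j-1}{D_i}\big)$. Then there is a critical point $w_{i,j}\in\mathbb{C}\setminus\{0\}$ of $f$, i.e. a solution of $$\sum_{k=1}^{n-1}\frac{(-1)^{n-k}D_kz^{D_k}}{z^{D_k}-a_k^{D_k}}+(-1)^nd_1=0,$$ with $|w_{i,j}-\widetilde w_{i,j}|<u^{2/K}|a_i|$. Moreover $w_{i_1,j_1}=w_{i_2,j_2}$ if and only if $(i_1,j_1)=(i_2,j_2)$.
   Context: Setup. Fix $p\in\{0,1\}$, $n\ge2$ and positive integers $d_1,\dots,d_n$ with $\xi:=\sum_{i=1}^n 1/d_i<1$; let $K=\max_i d_i$ and $D_i=d_i+d_{i+1}$ ($1\le i\le n-1$). If $p=1$: $0<s\le\min\{K^{-5\xi/(1-\xi)},K^{5-2K}\}$, $u=sK^{-5}$, $v=sK^{-2}$. If $p=0$: $0<s\le\min\{2^{-(1-\xi)^{-1}(1+1/d_n-2\xi/3)^{-1}},(4K)^{-3/(1-\xi)},K^{-2K(1+1/d_n+2(1-\xi)/3)^{-1}}\}$, $u=s^{1+1/d_n+2(1-\xi)/3}$, $v=s^{1/d_n+(1-\xi)/3}$. Let $a_1,\dots,a_{n-1}\in\mathbb{C}$ with $|a_{n-1}|=v^{1/d_n}$ and $|a_i|=u^{1/d_{i+1}}|a_{i+1}|$ for $1\le i\le n-2$. Let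 $f=f_{p,d_1,\dots,d_n}$, where $$f_{p,d_1,\dots,d_n}(z)=z^{(-1)^{n-p}d_1}\prod_{i=1}^{n-1}\big(z^{D_i}-a_i^{D_i}\big)^{(-1)^{n-i-p}}.$$ *)

theory Defs
  imports "HOL-Analysis.Analysis"
begin

definition DD :: "(nat \<Rightarrow> nat) \<Rightarrow> nat \<Rightarrow> nat" where
  "DD d i = d i + d (Suc i)"

definition crit_eq :: "nat \<Rightarrow> (nat \<Rightarrow> nat) \<Rightarrow> (nat \<Rightarrow> complex) \<Rightarrow> complex \<Rightarrow> bool" where
  "crit_eq n d a z \<longleftrightarrow>
     (\<forall>k\<in>{1..n-1}. z ^ DD d k \<noteq> a k ^ DD d k) \<and>
     (\<Sum>k=1..n-1. (-1) ^ (n - k) * of_nat (DD d k) * z ^ DD d k / (z ^ DD d k - a k ^ DD d k))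
       + (-1) ^ n * of_nat (d 1) = 0"

end

theory Submission
  imports Defs
begin

text \<open>Multiplying the critical-point equation by (-1)^(n-i) and splitting each term with
  k < i as D_k + D_k a_k^D_k / (z^D_k - a_k^D_k), the constants telescope to -d_i and the equation becomes
  D_i z^D_i / (z^D_i - a_i^D_i) - d_i + E_i(z) = 0. Because consecutive moduli |a_k| differ by the
  factors u^(1/d_(k+1)), every summand of E_i is O(u^(3/4 + 2/K)) on the annulus |z| ~ r_i |a_i|.
  Without E_i the solutions are exactly the points w~_(i,j); with it, the equation reads
  z^D_i = w~_(i,j)^D_i (1 + w(z)) with |w(z)| <= eta, and the D_i-th root of the right-hand side taken
  near w~_(i,j) maps the disc of radius eta |w~_(i,j)| into itself, so Brouwer's theorem yields the
  critical point. Points obtained for different i have moduli of different orders of magnitude; for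
  equal i their arguments lie within 1/D_i of pi (2j - 1)/D_i, so they differ for different j.\<close>

lemma norm_exp_minus_one_le:
  fixes z :: "'a::{banach, real_normed_field}"
  assumes "norm z \<le> 1/2"
  shows "norm (exp z - 1) \<le> 2 * norm z"
proof -
  have "norm (exp z - (\<Sum>i\<le>0. z ^ i / fact i)) \<le> exp (norm z) * (norm z ^ Suc 0) / fact 0"
    by (rule Taylor_exp_field)
  then have "norm (exp z - 1) \<le> exp (norm z) * norm z" by simp
  also have "\<dots> \<le> 2 * norm z"
  proof (rule mult_right_mono)
    have "exp (norm z) \<le> exp (1/2)" using assms by simp
    also have "\<dots> \<le> 2" by (rule exp_half_le2)
    finally show "exp (norm z) \<le> 2" .
  qed simp
  finally show ?thesis .
qed

lemma norm_divide_diff_le: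
  fixes X Y :: "'a::real_normed_field"
  assumes XY: "norm X \<le> t * norm Y" and t: "t \<le> 1/2" and Y: "Y \<noteq> 0"
  shows "X \<noteq> Y" and "norm (X / (Y - X)) \<le> 2 * t"
proof -
  have Y0: "0 < norm Y" using Y by simp
  have "t * norm Y \<le> 1/2 * norm Y" using t by (intro mult_right_mono) auto
  moreover have "norm Y - norm X \<le> norm (Y - X)" by (rule norm_triangle_ineq2)
  ultimately have YX: "norm Y / 2 \<le> norm (Y - X)" using XY by linarith
  then show "X \<noteq> Y" using Y0 by auto
  have "norm (X / (Y - X)) = norm X / norm (Y - X)" by (simp add: norm_divide)
  also have "\<dots> \<le> (t * norm Y) / (norm Y / 2)"
    using XY YX Y0 order_trans[OF norm_ge_zero XY] by (intro frac_le) auto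
  also have "\<dots> = 2 * t" using Y0 by (simp add: field_simps)
  finally show "norm (X / (Y - X)) \<le> 2 * t" .
qed

lemma norm_bounds_in_cball:
  fixes c z :: "'a::real_normed_vector"
  assumes "z \<in> cball c (e * norm c)"
  shows "(1 - e) * norm c \<le> norm z" and "norm z \<le> (1 + e) * norm c"
proof -
  have dz: "norm (c - z) \<le> e * norm c" using assms unfolding mem_cball dist_norm .
  then show "(1 - e) * norm c \<le> norm z"
    unfolding left_diff_distrib using norm_triangle_sub[of c z] by linarith
  show "norm z \<le> (1 + e) * norm c"
    unfolding distrib_right using norm_triangle_sub[of z c] norm_minus_commute[of c z] dz by linarith
qed

lemma inverse_one_minus_power_le_two:
  fixes \<eta> :: real
  assumes "0 \<le> \<eta>" "\<eta> \<le> 1/2" "real D * \<eta> \<le> 1/2"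
  shows "(1 / (1 - \<eta>)) ^ D \<le> 2"
proof -
  have "1 + real D * (- \<eta>) \<le> (1 + (- \<eta>)) ^ D"
    by (rule Bernoulli_inequality) (use assms in simp)
  then have b: "1/2 \<le> (1 - \<eta>) ^ D" using assms by simp
  have "(1 / (1 - \<eta>)) ^ D = 1 / (1 - \<eta>) ^ D" by (simp add: power_divide)
  also have "\<dots> \<le> 1 / (1/2)" using b by (intro divide_left_mono) auto
  finally show ?thesis by simp
qed

lemma one_plus_power_le_two:
  fixes \<eta> :: real
  assumes "0 \<le> \<eta>" "real D * \<eta> \<le> 1/2"
  shows "(1 + \<eta>) ^ D \<le> 2"
proof -
  have "(1 + \<eta>) ^ D \<le> exp \<eta> ^ D"
    using assms by (intro power_mono) (auto simp: add.commute)
  also have "\<dots> = exp (real D * \<eta>)" by (simp add: exp_of_nat_mult)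
  also have "\<dots> \<le> exp (1/2)" using assms by simp
  also have "\<dots> \<le> 2" by (rule exp_half_le2)
  finally show ?thesis .
qed

lemma scaled_power_le:
  fixes h y :: real and D K :: nat
  assumes "0 \<le> h" "h ^ D \<le> 2" "0 < y" "y \<le> real K powr (1/4)" "D \<le> 2 * K" "1 \<le> K"
  shows "(h * y) ^ D \<le> 2 * real K powr (real K / 2)"
proof -
  have "(h * y) ^ D = h ^ D * y ^ D" by (simp add: power_mult_distrib)
  also have "\<dots> \<le> 2 * (real K powr (1/4)) ^ D"
    using assms by (intro mult_mono power_mono) auto
  also have "(real K powr (1/4)) ^ D = real K powr (real D / 4)"
    using assms by (simp add: powr_realpow[symmetric] powr_powr)
  also have "\<dots> \<le> real K powr (real K / 2)" using assms by (intro powr_mono) auto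
  finally show ?thesis by simp
qed

lemma powr_quarter_separation:
  fixes x :: real
  assumes x: "3 \<le> x"
  shows "2 * x powr (1/4) * x powr (-2) < x powr (-1/4) / 2"
proof -
  have "3 powr (3/2) \<le> x powr (3/2)" using x by (intro powr_mono2) auto
  moreover have "(3::real) powr (3/2) = 3 * sqrt 3"
    by (simp add: powr_add[of 3 1 "1/2", simplified] powr_half_sqrt)
  moreover have "4/3 < sqrt 3" by (rule real_less_rsqrt) (simp add: power2_eq_square)
  ultimately have "4 < x powr (3/2)" by simp
  moreover have "0 < x powr (-7/4)" using x by simp
  ultimately have "2 * x powr (-7/4) < x powr (3/2) * x powr (-7/4) / 2" by simp
  moreover have "2 * x powr (1/4) * x powr (-2) = 2 * x powr (-7/4)"
    "x powr (3/2) * x powr (-7/4) = x powr (-1/4)"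
    using x by (simp_all add: powr_add[symmetric])
  ultimately show ?thesis by simp
qed

lemma powr_le_of_le_powr_divide:
  fixes s b x e :: real
  assumes "0 < s" "s \<le> b powr (x / e)" "0 < e"
  shows "s powr e \<le> b powr x"
proof -
  have "s powr e \<le> (b powr (x / e)) powr e" using assms by (intro powr_mono2) auto
  also have "\<dots> = b powr x" using assms by (simp add: powr_powr)
  finally show ?thesis .
qed

lemma two_le_of_sum_inverse_less_one:
  fixes d :: "nat \<Rightarrow> nat"
  assumes "finite I" "i \<in> I" "0 < d i" "(\<Sum>k\<in>I. 1 / real (d k)) < 1"
  shows "2 \<le> d i"
proof -
  have "1 / real (d i) \<le> (\<Sum>k\<in>I. 1 / real (d k))" using assms by (intro member_le_sum) auto
  then have "1 / real (d i) < 1" using assms(4) by linarith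
  with assms(3) show ?thesis by (simp add: divide_less_eq)
qed

lemma card_less_of_sum_inverse_less_one:
  fixes d :: "nat \<Rightarrow> nat"
  assumes "\<And>i. i \<in> I \<Longrightarrow> 0 < d i \<and> d i \<le> K" "0 < K" "(\<Sum>i\<in>I. 1 / real (d i)) < 1"
  shows "card I < K"
proof -
  have "(\<Sum>i\<in>I. 1 / real K) \<le> (\<Sum>i\<in>I. 1 / real (d i))"
    using assms(1,2) by (intro sum_mono divide_left_mono) auto
  then have "real (card I) / real K < 1" using assms(3) by simp
  then show ?thesis using assms(2) by (simp add: divide_less_eq)
qed

lemma norm_sign_mult_le:
  fixes X :: complex
  assumes "real D \<le> B" "cmod X \<le> t"
  shows "cmod ((-1) ^ m * (of_nat D * X)) \<le> B * t"
proof -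
  have "cmod ((-1) ^ m * (of_nat D * X)) = real D * cmod X" unfolding norm_mult norm_power by simp
  also have "\<dots> \<le> B * t" using assms by (intro mult_mono) auto
  finally show ?thesis .
qed

lemma minus_one_power_eq_if_even_sum:
  "even (p + q) \<Longrightarrow> (-1 :: 'a::ring_1) ^ p = (-1) ^ q"
  by (simp add: minus_one_power_iff)

lemma sum_split_at:
  fixes f :: "nat \<Rightarrow> 'a::comm_monoid_add"
  assumes "1 \<le> i" "i \<le> m"
  shows "(\<Sum>k=1..m. f k) = (\<Sum>k=1..i-1. f k) + f i + (\<Sum>k=Suc i..m. f k)"
proof -
  have "(\<Sum>k=1..m. f k) = (\<Sum>k\<in>{1..i} \<union> {Suc i..m}. f k)"
    using assms by (intro sum.cong) auto
  also have "\<dots> = (\<Sum>k=1..i. f k) + (\<Sum>k=Suc i..m. f k)"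
    by (rule sum.union_disjoint) auto
  also have "(\<Sum>k=1..i. f k) = (\<Sum>k=1..i-1. f k) + f i"
    using assms by (cases i) auto
  finally show ?thesis by (simp add: add.assoc)
qed

lemma alternating_sum_DD:
  "(\<Sum>k=1..m. (-1::complex) ^ (Suc m + k) * of_nat (DD d k)) + (-1) ^ Suc m * of_nat (d 1)
     = - of_nat (d (Suc m))"
proof (induction m)
  case 0 then show ?case by simp
next
  case (Suc m)
  let ?S = "\<Sum>k=1..m. (-1::complex) ^ (Suc m + k) * of_nat (DD d k)"
  have "(\<Sum>k=1..Suc m. (-1::complex) ^ (Suc (Suc m) + k) * of_nat (DD d k))
     = - ?S + (-1) ^ (Suc (Suc m) + Suc m) * of_nat (DD d (Suc m))"
    by (simp add: sum_negf[symmetric])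
  moreover have "(-1::complex) ^ (Suc (Suc m) + Suc m) = -1"
    by (simp add: power_add[symmetric] power_mult_distrib)
  ultimately have "(\<Sum>k=1..Suc m. (-1::complex) ^ (Suc (Suc m) + k) * of_nat (DD d k))
      + (-1) ^ Suc (Suc m) * of_nat (d 1) = - (?S + (-1) ^ Suc m * of_nat (d 1)) - of_nat (DD d (Suc m))"
    by (simp add: algebra_simps)
  also have "\<dots> = - of_nat (d (Suc (Suc m)))" using Suc.IH by (simp add: DD_def)
  finally show ?case .
qed

lemma crit_sum_sign_normalised:
  fixes a :: "nat \<Rightarrow> complex" and z :: complex
  assumes i: "i \<in> {1..n-1}"
  shows "(-1) ^ (n - i) * ((\<Sum>k=1..n-1. (-1) ^ (n - k) * of_nat (DD d k) * z ^ DD d k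
             / (z ^ DD d k - a k ^ DD d k)) + (-1) ^ n * of_nat (d 1))
     = (\<Sum>k=1..n-1. (-1) ^ (i + k) * (of_nat (DD d k) * (z ^ DD d k / (z ^ DD d k - a k ^ DD d k))))
       + (-1) ^ i * of_nat (d 1)"
proof -
  have "(-1::complex) ^ (n - i) * (-1) ^ n = (-1) ^ i"
    unfolding power_add[symmetric] using i by (intro minus_one_power_eq_if_even_sum) auto
  moreover have "(-1) ^ (n - i) * (\<Sum>k=1..n-1. (-1) ^ (n - k) * of_nat (DD d k) * z ^ DD d k
        / (z ^ DD d k - a k ^ DD d k))
      = (\<Sum>k=1..n-1. (-1) ^ (i + k) * (of_nat (DD d k) * (z ^ DD d k / (z ^ DD d k - a k ^ DD d k))))"
    unfolding sum_distrib_left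
  proof (rule sum.cong)
    fix k assume k: "k \<in> {1..n-1}"
    have "(-1::complex) ^ (n - i) * (-1) ^ (n - k) = (-1) ^ (i + k)"
      unfolding power_add[symmetric] using i k by (intro minus_one_power_eq_if_even_sum) auto
    then show "(-1) ^ (n - i) * ((-1) ^ (n - k) * of_nat (DD d k) * z ^ DD d k
        / (z ^ DD d k - a k ^ DD d k))
      = (-1) ^ (i + k) * (of_nat (DD d k) * (z ^ DD d k / (z ^ DD d k - a k ^ DD d k)))"
      by (simp add: algebra_simps)
  qed simp
  ultimately show ?thesis by (simp add: algebra_simps)
qed

lemma perturbed_power_equation:
  fixes Z A E w cD :: complex and p q :: nat
  assumes p: "0 < p" and q: "0 < q" and A: "A \<noteq> 0"
    and cD: "cD = - (of_nat p / of_nat q) * A" and Z: "Z = cD * (1 + w)"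
    and w: "w = E * (Z - A) / (of_nat p * A)" and Re_w: "-1 < Re w"
  shows "Z \<noteq> A" and "of_nat (p + q) * Z / (Z - A) - of_nat p + E = 0"
proof -
  show ZA: "Z \<noteq> A"
  proof
    assume "Z = A"
    then have "- (of_nat p / of_nat q) * A * (1 + w) = A" using Z cD by simp
    then have "- (of_nat p / of_nat q) * (1 + w) = 1" using A
      by (metis mult.commute mult.left_commute mult_cancel_left2)
    moreover have "1 + w = - (of_nat q / of_nat p) * (- (of_nat p / of_nat q) * (1 + w))"
      using p q by (simp add: field_simps)
    ultimately have "1 + w = - (of_nat q / of_nat p)" by simp
    then have "Re (1 + w) = - (real q / real p)" by simp
    moreover have "0 < real q / real p" using p q by simp
    ultimately show False using Re_w by simp
  qed
  have e1: "E * (Z - A) = w * (of_nat p * A)" using w A p by simp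
  have e2: "of_nat q * Z = - of_nat p * A * (1 + w)" using Z cD q by simp
  have "of_nat (p + q) * Z / (Z - A) - of_nat p + E
      = (of_nat q * Z + of_nat p * A + E * (Z - A)) / (Z - A)"
    using ZA by (simp add: field_simps)
  also have "of_nat q * Z + of_nat p * A + E * (Z - A) = 0"
    unfolding e1 e2 by (simp add: algebra_simps)
  finally show "of_nat (p + q) * Z / (Z - A) - of_nat p + E = 0" by simp
qed

lemma root_of_perturbation_close:
  fixes c w :: complex
  assumes w: "cmod w \<le> e" and e: "e \<le> 1/4" and D: "4 \<le> D"
  shows "cmod (c * exp (Ln (1 + w) / of_nat D) - c) \<le> e * cmod c"
proof -
  have "cmod (Ln (1 + w)) \<le> 2 * cmod w" using w e by (intro norm_Ln_le) auto
  then have "cmod (Ln (1 + w)) / real D \<le> 2 * cmod w / 4" using D by (intro frac_le) auto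
  then have LD: "cmod (Ln (1 + w) / of_nat D) \<le> cmod w / 2" by (simp add: norm_divide)
  have "c * exp (Ln (1 + w) / of_nat D) - c = c * (exp (Ln (1 + w) / of_nat D) - 1)"
    by (simp add: algebra_simps)
  then have "cmod (c * exp (Ln (1 + w) / of_nat D) - c) = cmod c * cmod (exp (Ln (1 + w) / of_nat D) - 1)"
    by (simp add: norm_mult)
  also have "\<dots> \<le> cmod c * (2 * cmod (Ln (1 + w) / of_nat D))"
    using LD w e by (intro mult_left_mono norm_exp_minus_one_le) auto
  also have "\<dots> \<le> cmod c * e" using LD w by (intro mult_left_mono) auto
  also have "\<dots> = e * cmod c" by (rule mult.commute)
  finally show ?thesis .
qed

text \<open>The D-th root of c^D (1 + w z) taken near c maps the disc into itself, so Brouwer's theorem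
  gives a fixed point.\<close>

lemma perturbed_power_root:
  fixes c :: complex and w :: "complex \<Rightarrow> complex" and e :: real and D :: nat
  assumes D: "4 \<le> D" and c: "c \<noteq> 0" and e: "0 < e" "e \<le> 1/4"
    and w_cont: "continuous_on (cball c (e * cmod c)) w"
    and w_small: "\<And>z. z \<in> cball c (e * cmod c) \<Longrightarrow> cmod (w z) \<le> e"
  obtains z L where "z \<in> cball c (e * cmod c)" and "z ^ D = c ^ D * (1 + w z)"
    and "z = c * exp (L / of_nat D)" and "cmod L \<le> 2 * e"
proof -
  define B where "B = cball c (e * cmod c)"
  define G where "G z = c * exp (Ln (1 + w z) / of_nat D)" for z
  have Re_pos: "0 < Re (1 + w z)" if "z \<in> B" for z
  proof -
    have "- Re (w z) \<le> cmod (w z)" using abs_Re_le_cmod[of "w z"] by linarith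
    then show ?thesis using w_small[of z] that e by (simp add: B_def)
  qed
  have G_into: "G \<in> B \<rightarrow> B"
  proof
    fix z assume "z \<in> B"
    then have "cmod (G z - c) \<le> e * cmod c"
      unfolding G_def using w_small e D by (intro root_of_perturbation_close) (auto simp: B_def)
    then show "G z \<in> B"
      unfolding B_def mem_cball dist_norm using norm_minus_commute[of c "G z"] by linarith
  qed
  have "1 + w z \<notin> \<real>\<^sub>\<le>\<^sub>0" if "z \<in> B" for z
    using Re_pos[OF that] by (simp add: complex_nonpos_Reals_iff)
  then have G_cont: "continuous_on B G"
    unfolding G_def using w_cont D by (intro continuous_intros) (auto simp: B_def)
  have "0 < e * cmod c" using e c by simp
  then obtain z where z: "z \<in> B" and Gz: "G z = z"
    using brouwer_ball[OF _ G_cont[unfolded B_def] G_into[unfolded B_def]] unfolding B_def by blast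
  define L where "L = Ln (1 + w z)"
  have "1 + w z \<noteq> 0" using Re_pos[OF z] by (auto simp: complex_eq_iff)
  then have expL: "exp L = 1 + w z" by (simp add: L_def)
  have zL: "z = c * exp (L / of_nat D)" using Gz by (simp add: G_def L_def)
  have "exp (L / of_nat D) ^ D = exp L" using D by (simp add: exp_of_nat_mult[symmetric])
  then have "z ^ D = c ^ D * (1 + w z)" using expL by (subst zL) (simp add: power_mult_distrib)
  moreover have "cmod L \<le> 2 * e"
  proof -
    have "cmod (w z) \<le> e" using w_small z by (simp add: B_def)
    moreover have "cmod L \<le> 2 * cmod (w z)" unfolding L_def using calculation e by (intro norm_Ln_le) auto
    ultimately show ?thesis by simp
  qed
  ultimately show ?thesis using that z zL by (simp add: B_def)
qed

lemma eq_of_dvd_diff: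
  fixes D j j' :: nat
  assumes dvd: "int D dvd int j - int j'" and j: "1 \<le> j" "j \<le> D" "1 \<le> j'" "j' \<le> D"
  shows "j = j'"
proof -
  obtain m where m: "int j - int j' = int D * m" using dvd by (elim dvdE)
  have "m = 0"
  proof (rule ccontr)
    assume "m \<noteq> 0"
    then have "int D * 1 \<le> int D * \<bar>m\<bar>" by (intro mult_left_mono) auto
    then have "int D \<le> \<bar>int j - int j'\<bar>" unfolding m by (simp add: abs_mult)
    with j show False by auto
  qed
  with m show ?thesis by simp
qed

lemma rotation_index_unique:
  fixes b L L' :: complex and D j j' :: nat
  assumes D: "0 < D" and b: "b \<noteq> 0" and j: "1 \<le> j" "j \<le> D" "1 \<le> j'" "j' \<le> D"
    and L: "cmod L \<le> 1" "cmod L' \<le> 1"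
    and eq: "b * exp (complex_of_real pi * \<i> * of_real ((2 * real j - 1) / real D)) * exp (L / of_nat D)
           = b * exp (complex_of_real pi * \<i> * of_real ((2 * real j' - 1) / real D)) * exp (L' / of_nat D)"
  shows "j = j'"
proof -
  define x where "x = complex_of_real pi * \<i> * of_real ((2 * real j - 1) / real D) + L / of_nat D"
  define x' where "x' = complex_of_real pi * \<i> * of_real ((2 * real j' - 1) / real D) + L' / of_nat D"
  have "exp x = exp x'" using eq b by (simp add: x_def x'_def exp_add mult.assoc)
  then have "exp (x - x') = 1" by (simp add: exp_diff)
  then obtain m :: int where m: "Im (x - x') = of_int (2 * m) * pi" unfolding exp_eq_1 by blast
  have "Im (x - x') = pi * ((2 * real j - 1) / real D) + Im L / real D
      - (pi * ((2 * real j' - 1) / real D) + Im L' / real D)"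
    unfolding x_def x'_def by (simp add: Im_divide_of_nat)
  also have "\<dots> = (2 * pi * (real j - real j') + (Im L - Im L')) / real D"
    by (simp add: divide_simps algebra_simps)
  finally have "2 * pi * (real j - real j') + (Im L - Im L') = of_int (2 * m) * pi * real D"
    using m D by (simp add: divide_eq_eq)
  then have key: "Im L - Im L' = 2 * pi * (real_of_int m * real D - (real j - real j'))"
    by (simp add: algebra_simps)
  define t where "t = real_of_int m * real D - (real j - real j')"
  have "\<bar>Im L - Im L'\<bar> \<le> 2" using abs_Im_le_cmod[of L] abs_Im_le_cmod[of L'] L by linarith
  then have "\<bar>t\<bar> * pi \<le> 1" unfolding key t_def[symmetric] by (simp add: abs_mult algebra_simps)
  then have "\<bar>t\<bar> \<le> 1 / pi" using pi_gt_zero by (simp add: pos_le_divide_eq)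
  moreover have "1 / pi < 1" using pi_gt3 by simp
  ultimately have "\<bar>real_of_int m * real D - (real j - real j')\<bar> < 1" unfolding t_def by linarith
  then have "\<bar>of_int (m * int D - (int j - int j'))\<bar> < (1::real)" by simp
  then have "m * int D = int j - int j'" by linarith
  then have "int D dvd int j - int j'" by (metis dvd_triv_right)
  with j show ?thesis by (intro eq_of_dvd_diff) auto
qed

text \<open>The hypotheses on p, s and v are used only through u <= K^(-2K) and a_(n-1) \<noteq> 0.\<close>

locale critical_setup =
  fixes n K :: nat and d :: "nat \<Rightarrow> nat" and a :: "nat \<Rightarrow> complex" and u :: real
  assumes two_le_n: "2 \<le> n"
    and d_bounds: "\<And>i. i \<in> {1..n} \<Longrightarrow> 2 \<le> d i \<and> d i \<le> K"
    and n_less_K: "n < K"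
    and u_pos: "0 < u"
    and u_le: "u \<le> real K powr (- 2 * real K)"
    and a_last_nonzero: "a (n - 1) \<noteq> 0"
    and norm_a_step: "\<And>i. i \<in> {1..n-2} \<Longrightarrow>
      cmod (a i) = u powr (1 / real (d (Suc i))) * cmod (a (Suc i))"
begin

lemma K_ge_3: "3 \<le> K"
  using two_le_n n_less_K by simp

lemma d_index_bounds:
  assumes "k \<in> {1..n-1}"
  shows "2 \<le> d k" "d k \<le> K" "2 \<le> d (Suc k)" "d (Suc k) \<le> K"
  using d_bounds[of k] d_bounds[of "Suc k"] assms by auto

lemma DD_bounds:
  assumes "k \<in> {1..n-1}"
  shows "4 \<le> DD d k" "DD d k \<le> 2 * K"
  using d_index_bounds[OF assms] by (auto simp: DD_def)

lemma u_le_one: "u \<le> 1"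
proof -
  have "real K powr (- 2 * real K) \<le> real K powr 0" using K_ge_3 by (intro powr_mono) auto
  then show ?thesis using u_le K_ge_3 by simp
qed

lemma u_powr_le:
  assumes "0 \<le> x"
  shows "u powr (x / real K) \<le> real K powr (- 2 * x)"
proof -
  have "u powr (x / real K) \<le> (real K powr (- 2 * real K)) powr (x / real K)"
    using u_pos u_le assms by (intro powr_mono2) auto
  also have "\<dots> = real K powr (- 2 * x)" using K_ge_3 by (simp add: powr_powr)
  finally show ?thesis .
qed

lemma norm_a_pos:
  assumes "k \<in> {1..n-1}"
  shows "0 < cmod (a k)"
  using assms
proof (induction "n - 1 - k" arbitrary: k)
  case 0
  then have "k = n - 1" by auto
  then show ?case using a_last_nonzero by simp
next
  case (Suc m)
  then have k: "k \<in> {1..n-2}" and "Suc k \<in> {1..n-1}" "m = n - 1 - Suc k" by auto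
  then have "0 < cmod (a (Suc k))" using Suc.hyps(1) by blast
  then show ?case unfolding norm_a_step[OF k] using u_pos by (intro mult_pos_pos) auto
qed

lemma norm_a_mono:
  assumes "1 \<le> k" "k \<le> l" "l \<le> n - 1"
  shows "cmod (a k) \<le> cmod (a l)"
  using assms(2,3)
proof (induction l)
  case 0 then show ?case by simp
next
  case (Suc l)
  show ?case
  proof (cases "k = Suc l")
    case False
    with Suc.prems assms(1) have kl: "k \<le> l" and l: "l \<in> {1..n-2}" by auto
    have "cmod (a k) \<le> cmod (a l)" using Suc.IH kl Suc.prems by simp
    also have "\<dots> = u powr (1 / real (d (Suc l))) * cmod (a (Suc l))" by (rule norm_a_step[OF l])
    also have "\<dots> \<le> cmod (a (Suc l))" using u_pos u_le_one by (intro mult_left_le_one_le powr_le1) auto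
    finally show ?thesis .
  qed simp
qed

lemma norm_a_gap:
  assumes "1 \<le> k" "k < l" "l \<le> n - 1"
  shows "cmod (a k) \<le> real K powr (-2) * cmod (a l)"
proof -
  have k: "k \<in> {1..n-2}" using assms by auto
  have sk: "Suc k \<in> {1..n}" using k by auto
  have "1 / real K \<le> 1 / real (d (Suc k))"
    using d_bounds[OF sk] by (intro divide_left_mono) auto
  then have "u powr (1 / real (d (Suc k))) \<le> u powr (1 / real K)"
    using u_pos u_le_one by (intro powr_mono') auto
  also have "\<dots> \<le> real K powr (-2)" using u_powr_le[of 1] by simp
  finally have "cmod (a k) \<le> real K powr (-2) * cmod (a (Suc k))"
    unfolding norm_a_step[OF k] by (simp add: mult_right_mono)
  also have "\<dots> \<le> real K powr (-2) * cmod (a l)"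
    using assms by (intro mult_left_mono norm_a_mono) auto
  finally show ?thesis .
qed

text \<open>eta is the relative radius of the discs around the w~_(i,j); tau bounds each power
  (|a_k|/|z|)^D_k resp. (|z|/|a_k|)^D_k entering the remainder E_i.\<close>

definition eta :: real where
  "eta = u powr (2 / real K) / (2 * real K)"

definition tau :: real where
  "tau = 2 * u powr (3/4 + 2 / real K)"

lemma u_powr_two_div_K_le: "u powr (2 / real K) \<le> 1/81"
proof -
  have "u powr (2 / real K) \<le> real K powr (- 2 * 2)" using u_powr_le[of 2] by simp
  also have "\<dots> = 1 / real K ^ 4" using K_ge_3 by (simp add: powr_neg_numeral)
  also have "\<dots> \<le> 1 / 3 ^ 4" using K_ge_3 by (intro divide_left_mono power_mono) auto
  finally show ?thesis by simp
qed

lemma eta_pos: "0 < eta"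
  using u_pos K_ge_3 by (simp add: eta_def)

lemma eta_le: "real (2 * K) * eta \<le> 1/2"
  using u_powr_two_div_K_le K_ge_3 by (simp add: eta_def)

lemma eta_le_quarter: "eta \<le> 1/4"
proof -
  have "eta * 4 \<le> eta * real (2 * K)" using K_ge_3 eta_pos by (intro mult_left_mono) auto
  then show ?thesis using eta_le by (simp add: algebra_simps)
qed

lemma DD_eta_le:
  assumes "k \<in> {1..n-1}"
  shows "real (DD d k) * eta \<le> 1/2"
proof -
  have "real (DD d k) * eta \<le> real (2 * K) * eta"
    using DD_bounds[OF assms] eta_pos by (intro mult_right_mono) auto
  with eta_le show ?thesis by linarith
qed

lemma tau_le: "tau \<le> 1/2"
proof -
  have "u powr (3/4) \<le> 1" using u_pos u_le_one by (intro powr_le1) auto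
  then have "u powr (3/4) * u powr (2 / real K) \<le> 1 * (1/81)"
    using u_powr_two_div_K_le by (intro mult_mono) auto
  then show ?thesis using u_pos by (simp add: tau_def powr_add)
qed

text \<open>Raising u^(1/m) to the power m + m' gains at least the factor u^(2/K) over u, and
  K^(K/2) <= u^(-1/4) absorbs the constant g.\<close>

lemma ratio_power_le:
  fixes \<beta> g :: real and m m' :: nat
  assumes m: "2 \<le> m" "m \<le> K" and m': "2 \<le> m'"
    and \<beta>: "0 \<le> \<beta>" "\<beta> \<le> g * u powr (1 / real m)"
    and g: "0 \<le> g" "g ^ (m + m') \<le> 2 * real K powr (real K / 2)"
  shows "\<beta> ^ (m + m') \<le> tau"
proof -
  have "\<beta> ^ (m + m') \<le> (g * u powr (1 / real m)) ^ (m + m')"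
    using \<beta> by (intro power_mono) auto
  also have "\<dots> = g ^ (m + m') * u powr (real (m + m') / real m)"
    using u_pos m by (simp add: power_mult_distrib powr_realpow[symmetric] powr_powr)
  also have "\<dots> \<le> (2 * real K powr (real K / 2)) * u powr (1 + 2 / real K)"
  proof (rule mult_mono[OF g(2)])
    have "2 / real K \<le> real m' / real m" using m m' by (intro frac_le) auto
    moreover have "1 + real m' / real m = real (m + m') / real m" using m by (simp add: field_simps)
    ultimately show "u powr (real (m + m') / real m) \<le> u powr (1 + 2 / real K)"
      using u_pos u_le_one by (intro powr_mono') auto
  qed auto
  also have "\<dots> \<le> (2 * u powr (-1/4)) * u powr (1 + 2 / real K)"
  proof (rule mult_right_mono)
    have "real K powr (real K / 2) = (real K powr (- 2 * real K)) powr (-1/4)"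
      by (simp add: powr_powr)
    also have "\<dots> \<le> u powr (-1/4)" using u_pos u_le by (intro powr_mono2') auto
    finally show "2 * real K powr (real K / 2) \<le> 2 * u powr (-1/4)" by simp
  qed auto
  also have "\<dots> = tau" using u_pos by (simp add: tau_def powr_add[symmetric])
  finally show ?thesis .
qed

lemma u_budget: "24 * real K ^ 2 * real (n - 2) * u powr (3/4) \<le> 1"
proof (cases "n = 2")
  case False
  then have K4: "4 \<le> K" using n_less_K two_le_n by linarith
  have "u powr (3/4) = u powr ((3 * real K / 4) / real K)" using K4 by simp
  also have "\<dots> \<le> real K powr (- 2 * (3 * real K / 4))" by (intro u_powr_le) simp
  also have "\<dots> \<le> real K powr (- 6)" using K4 by (intro powr_mono) auto
  also have "\<dots> = 1 / real K ^ 6" using K4 by (simp add: powr_neg_numeral)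
  finally have "u powr (3/4) \<le> 1 / real K ^ 6" .
  then have "24 * real K ^ 2 * real (n - 2) * u powr (3/4) \<le> 24 * real K ^ 2 * real K * (1 / real K ^ 6)"
    using n_less_K by (intro mult_mono) auto
  also have "\<dots> = 24 / real K ^ 3" using K4 by (simp add: field_simps power_eq_if)
  also have "\<dots> \<le> 24 / 4 ^ 3" using K4 by (intro divide_left_mono power_mono) auto
  also have "\<dots> \<le> 1" by simp
  finally show ?thesis .
qed simp

lemma remainder_budget: "real (n - 2) * (real (2 * K) * (2 * tau)) \<le> 2/3 * eta"
proof -
  have "tau = 2 * u powr (3/4) * u powr (2 / real K)" by (simp add: tau_def powr_add)
  then have "real (n - 2) * (real (2 * K) * (2 * tau))
      = (24 * real K ^ 2 * real (n - 2) * u powr (3/4)) * (u powr (2 / real K) / (3 * real K))"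
    using K_ge_3 by (simp add: field_simps power2_eq_square)
  also have "\<dots> \<le> 1 * (u powr (2 / real K) / (3 * real K))"
    using u_budget by (intro mult_right_mono) auto
  also have "\<dots> = 2/3 * eta" by (simp add: eta_def)
  finally show ?thesis .
qed

definition root_scale :: "nat \<Rightarrow> real" where
  "root_scale i = (real (d i) / real (d (Suc i))) powr (1 / real (DD d i))"

definition approx_root :: "nat \<Rightarrow> nat \<Rightarrow> complex" where
  "approx_root i j = complex_of_real (root_scale i) * a i
     * exp (complex_of_real pi * \<i> * of_real ((2 * real j - 1) / real (DD d i)))"

abbreviation disc :: "nat \<Rightarrow> nat \<Rightarrow> complex set" where
  "disc i j \<equiv> cball (approx_root i j) (eta * cmod (approx_root i j))"

lemma root_scale_pos:
  assumes "i \<in> {1..n-1}"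
  shows "0 < root_scale i"
  using d_index_bounds[OF assms] by (simp add: root_scale_def)

lemma root_scale_power:
  assumes i: "i \<in> {1..n-1}"
  shows "root_scale i ^ DD d i = real (d i) / real (d (Suc i))"
proof -
  have "root_scale i ^ DD d i = root_scale i powr real (DD d i)"
    using root_scale_pos[OF i] by (simp add: powr_realpow)
  also have "\<dots> = (real (d i) / real (d (Suc i))) powr (1 / real (DD d i) * real (DD d i))"
    by (simp add: root_scale_def powr_powr)
  also have "\<dots> = real (d i) / real (d (Suc i))"
    using DD_bounds[OF i] d_index_bounds[OF i] by simp
  finally show ?thesis .
qed

lemma root_scale_bounds:
  assumes i: "i \<in> {1..n-1}"
  shows "real K powr (-1/4) \<le> root_scale i" and "root_scale i \<le> real K powr (1/4)"
    and "1 / root_scale i \<le> real K powr (1/4)"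
proof -
  note di = d_index_bounds[OF i]
  define x where "x = real (d i) / real (d (Suc i))"
  have D: "4 \<le> real (DD d i)" using DD_bounds[OF i] by simp
  have x0: "0 < x" using di by (simp add: x_def)
  have "x \<le> real (d i) / 1" unfolding x_def using di by (intro divide_left_mono) auto
  then have x_le: "x \<le> real K" using di by simp
  have "1 / real K \<le> 1 / real (d (Suc i))" using di by (intro divide_left_mono) auto
  also have "\<dots> \<le> x" unfolding x_def using di by (intro divide_right_mono) auto
  finally have x_ge: "1 / real K \<le> x" .
  have "real K powr (-1/4) \<le> real K powr (- 1 / real (DD d i))"
    using K_ge_3 D by (intro powr_mono) (auto simp: field_simps)
  also have "\<dots> = (1 / real K) powr (1 / real (DD d i))"
    using K_ge_3 by (simp add: powr_divide powr_minus_divide)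
  also have "\<dots> \<le> root_scale i"
    unfolding root_scale_def x_def[symmetric] using x_ge K_ge_3 by (intro powr_mono2) auto
  finally show r: "real K powr (-1/4) \<le> root_scale i" .
  have "1 / root_scale i \<le> 1 / real K powr (-1/4)"
    using r root_scale_pos[OF i] K_ge_3 by (intro divide_left_mono mult_pos_pos) auto
  also have "\<dots> = real K powr (1/4)" using K_ge_3 by (simp add: powr_minus_divide[symmetric])
  finally show "1 / root_scale i \<le> real K powr (1/4)" .
  have "root_scale i \<le> real K powr (1 / real (DD d i))"
    unfolding root_scale_def x_def[symmetric] using x0 x_le by (intro powr_mono2) auto
  also have "\<dots> \<le> real K powr (1/4)" using K_ge_3 D by (intro powr_mono) (auto simp: field_simps)
  finally show "root_scale i \<le> real K powr (1/4)" .
qed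

lemma norm_approx_root: "cmod (approx_root i j) = root_scale i * cmod (a i)"
proof -
  have "cmod (exp (complex_of_real pi * \<i> * of_real ((2 * real j - 1) / real (DD d i)))) = 1"
    by (metis norm_exp_i_times mult.commute mult.assoc of_real_mult)
  moreover have "0 \<le> root_scale i" by (simp add: root_scale_def)
  ultimately show ?thesis by (simp add: approx_root_def norm_mult)
qed

lemma approx_root_power:
  assumes i: "i \<in> {1..n-1}" and j: "1 \<le> j"
  shows "approx_root i j ^ DD d i = - (of_nat (d i) / of_nat (d (Suc i))) * a i ^ DD d i"
proof -
  define D where "D = DD d i"
  have D: "4 \<le> D" using DD_bounds[OF i] by (simp add: D_def)
  have "exp (complex_of_real pi * \<i> * of_real ((2 * real j - 1) / real D)) ^ D
      = exp (of_nat D * (complex_of_real pi * \<i> * of_real ((2 * real j - 1) / real D)))"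
    by (rule exp_of_nat_mult[symmetric])
  also have "of_nat D * (complex_of_real pi * \<i> * of_real ((2 * real j - 1) / real D))
      = of_nat (2 * j - 1) * (complex_of_real pi * \<i>)"
    using D j by (simp add: of_nat_diff field_simps)
  also have "exp \<dots> = exp (complex_of_real pi * \<i>) ^ (2 * j - 1)" by (rule exp_of_nat_mult)
  also have "\<dots> = -1" using j by (simp add: minus_one_power_iff)
  finally have rot: "exp (complex_of_real pi * \<i> * of_real ((2 * real j - 1) / real D)) ^ D = -1" .
  show ?thesis
    unfolding approx_root_def D_def[symmetric] power_mult_distrib rot of_real_power[symmetric]
      root_scale_power[OF i, folded D_def] by simp
qed

lemma norm_in_disc:
  assumes "z \<in> disc i j"
  shows "(1 - eta) * root_scale i * cmod (a i) \<le> cmod z"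
    and "cmod z \<le> (1 + eta) * root_scale i * cmod (a i)"
  using norm_bounds_in_cball[OF assms] by (simp_all add: norm_approx_root mult.assoc)

lemma norm_in_disc_K_bounds:
  assumes i: "i \<in> {1..n-1}" and z: "z \<in> disc i j"
  shows "real K powr (-1/4) / 2 * cmod (a i) \<le> cmod z"
    and "cmod z \<le> 2 * real K powr (1/4) * cmod (a i)"
proof -
  note r = root_scale_bounds[OF i] and \<rho> = norm_a_pos[OF i]
  have "eta * root_scale i \<le> 1/4 * root_scale i"
    using eta_le_quarter root_scale_pos[OF i] by (intro mult_right_mono) auto
  then have "real K powr (-1/4) / 2 \<le> (1 - eta) * root_scale i"
    unfolding left_diff_distrib using r(1) root_scale_pos[OF i] by linarith
  then have "real K powr (-1/4) / 2 * cmod (a i) \<le> (1 - eta) * root_scale i * cmod (a i)"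
    using \<rho> by (intro mult_right_mono) auto
  then show "real K powr (-1/4) / 2 * cmod (a i) \<le> cmod z" using norm_in_disc(1)[OF z] by simp
  have "(1 + eta) * root_scale i * cmod (a i) \<le> 2 * real K powr (1/4) * cmod (a i)"
    using eta_le_quarter r(2) root_scale_pos[OF i] \<rho> by (intro mult_right_mono mult_mono) auto
  then show "cmod z \<le> 2 * real K powr (1/4) * cmod (a i)" using norm_in_disc(2)[OF z] by simp
qed

lemma lower_term_small:
  assumes i: "i \<in> {1..n-1}" and k: "k \<in> {1..i-1}"
    and z: "(1 - eta) * root_scale i * cmod (a i) \<le> cmod z"
  shows "z ^ DD d k \<noteq> a k ^ DD d k"
    and "cmod (a k ^ DD d k / (z ^ DD d k - a k ^ DD d k)) \<le> 2 * tau"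
proof -
  have k': "k \<in> {1..n-2}" "k \<in> {1..n-1}" using i k by auto
  note dk = d_index_bounds[OF k'(2)]
  define r where "r = root_scale i"
  define g where "g = (1 / (1 - eta)) * (1 / r)"
  have r: "0 < r" "1 / r \<le> real K powr (1/4)"
    using root_scale_pos[OF i] root_scale_bounds(3)[OF i] by (simp_all add: r_def)
  have \<rho>: "0 < cmod (a i)" using norm_a_pos[OF i] .
  have eta1: "eta < 1" using eta_le_quarter by simp
  have "0 < (1 - eta) * r * cmod (a i)" using r \<rho> eta1 by (intro mult_pos_pos) auto
  then have z0: "0 < cmod z" using z unfolding r_def by linarith
  have "cmod (a k) \<le> u powr (1 / real (d (Suc k))) * cmod (a i)"
    unfolding norm_a_step[OF k'(1)] using k i by (intro mult_left_mono norm_a_mono) auto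
  then have "cmod (a k) / cmod z \<le> (u powr (1 / real (d (Suc k))) * cmod (a i)) / ((1 - eta) * r * cmod (a i))"
    using z z0 eta1 r \<rho> by (intro frac_le) (auto simp: r_def)
  also have "\<dots> = g * u powr (1 / real (d (Suc k)))" using \<rho> by (simp add: g_def)
  finally have \<beta>: "cmod (a k) / cmod z \<le> g * u powr (1 / real (d (Suc k)))" .
  have "(1 / (1 - eta)) ^ DD d k \<le> 2"
    using eta_pos eta_le_quarter DD_eta_le[OF k'(2)] by (intro inverse_one_minus_power_le_two) auto
  then have "g ^ DD d k \<le> 2 * real K powr (real K / 2)"
    unfolding g_def using eta1 r DD_bounds[OF k'(2)] K_ge_3 by (intro scaled_power_le) auto
  then have "(cmod (a k) / cmod z) ^ (d (Suc k) + d k) \<le> tau"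
    using \<beta> dk eta1 r
    by (intro ratio_power_le[where g = g]) (auto simp: g_def DD_def add.commute)
  then have "cmod (a k ^ DD d k) \<le> tau * cmod (z ^ DD d k)"
    using z0 by (simp add: DD_def add.commute norm_power power_divide divide_le_eq)
  from norm_divide_diff_le[OF this tau_le] z0
  show "z ^ DD d k \<noteq> a k ^ DD d k" "cmod (a k ^ DD d k / (z ^ DD d k - a k ^ DD d k)) \<le> 2 * tau"
    by auto
qed

lemma upper_term_small:
  assumes i: "i \<in> {1..n-1}" and k: "k \<in> {Suc i..n-1}"
    and z: "cmod z \<le> (1 + eta) * root_scale i * cmod (a i)"
  shows "z ^ DD d k \<noteq> a k ^ DD d k"
    and "cmod (z ^ DD d k / (z ^ DD d k - a k ^ DD d k)) \<le> 2 * tau"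
proof -
  have k': "k - 1 \<in> {1..n-2}" "k \<in> {1..n-1}" and sk: "Suc (k - 1) = k" using i k by auto
  note dk = d_index_bounds[OF k'(2)]
  define r where "r = root_scale i"
  define g where "g = (1 + eta) * r"
  have r: "0 < r" "r \<le> real K powr (1/4)"
    using root_scale_pos[OF i] root_scale_bounds(2)[OF i] by (simp_all add: r_def)
  have \<rho>: "0 < cmod (a k)" using norm_a_pos[OF k'(2)] .
  have "cmod (a i) \<le> cmod (a (k - 1))" using i k by (intro norm_a_mono) auto
  also have "\<dots> = u powr (1 / real (d k)) * cmod (a k)" using norm_a_step[OF k'(1)] unfolding sk .
  finally have "(1 + eta) * r * cmod (a i) \<le> (1 + eta) * r * (u powr (1 / real (d k)) * cmod (a k))"
    using eta_pos r by (intro mult_left_mono) auto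
  with z have "cmod z \<le> (1 + eta) * r * (u powr (1 / real (d k)) * cmod (a k))"
    by (simp add: r_def)
  then have \<beta>: "cmod z / cmod (a k) \<le> g * u powr (1 / real (d k))"
    using \<rho> by (simp add: g_def divide_le_eq algebra_simps)
  have "(1 + eta) ^ DD d k \<le> 2"
    using eta_pos DD_eta_le[OF k'(2)] by (intro one_plus_power_le_two) auto
  then have "g ^ DD d k \<le> 2 * real K powr (real K / 2)"
    unfolding g_def using eta_pos r DD_bounds[OF k'(2)] K_ge_3 by (intro scaled_power_le) auto
  then have "(cmod z / cmod (a k)) ^ (d k + d (Suc k)) \<le> tau"
    using \<beta> dk eta_pos r by (intro ratio_power_le[where g = g]) (auto simp: g_def DD_def)
  then have "cmod (z ^ DD d k) \<le> tau * cmod (a k ^ DD d k)"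
    using \<rho> by (simp add: DD_def norm_power power_divide divide_le_eq)
  from norm_divide_diff_le[OF this tau_le] \<rho>
  have "z ^ DD d k \<noteq> a k ^ DD d k" "cmod (z ^ DD d k / (a k ^ DD d k - z ^ DD d k)) \<le> 2 * tau"
    by auto
  then show "z ^ DD d k \<noteq> a k ^ DD d k" "cmod (z ^ DD d k / (z ^ DD d k - a k ^ DD d k)) \<le> 2 * tau"
    by (metis minus_diff_eq minus_divide_right norm_minus_cancel)+
qed

definition remainder :: "nat \<Rightarrow> complex \<Rightarrow> complex" where
  "remainder i z =
     (\<Sum>k=1..i-1. (-1) ^ (i + k) * (of_nat (DD d k) * (a k ^ DD d k / (z ^ DD d k - a k ^ DD d k))))
   + (\<Sum>k=Suc i..n-1. (-1) ^ (i + k) * (of_nat (DD d k) * (z ^ DD d k / (z ^ DD d k - a k ^ DD d k))))"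

lemma crit_sum_decomposition:
  assumes i: "i \<in> {1..n-1}"
    and nz: "\<And>k. k \<in> {1..i-1} \<Longrightarrow> z ^ DD d k \<noteq> a k ^ DD d k"
  shows "(-1) ^ (n - i) * ((\<Sum>k=1..n-1. (-1) ^ (n - k) * of_nat (DD d k) * z ^ DD d k
             / (z ^ DD d k - a k ^ DD d k)) + (-1) ^ n * of_nat (d 1))
     = of_nat (DD d i) * z ^ DD d i / (z ^ DD d i - a i ^ DD d i) - of_nat (d i) + remainder i z"
proof -
  define t where "t k = of_nat (DD d k) * (z ^ DD d k / (z ^ DD d k - a k ^ DD d k))" for k
  have lower: "(-1) ^ (i + k) * t k = (-1) ^ (i + k) * of_nat (DD d k)
      + (-1) ^ (i + k) * (of_nat (DD d k) * (a k ^ DD d k / (z ^ DD d k - a k ^ DD d k)))"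
    if "k \<in> {1..i-1}" for k
  proof -
    have "z ^ DD d k - a k ^ DD d k \<noteq> 0" using nz[OF that] by simp
    then show ?thesis by (simp add: t_def field_simps)
  qed
  have split: "(\<Sum>k=1..n-1. (-1) ^ (i + k) * t k)
      = (\<Sum>k=1..i-1. (-1) ^ (i + k) * t k) + (-1) ^ (i + i) * t i + (\<Sum>k=Suc i..n-1. (-1) ^ (i + k) * t k)"
    using i by (intro sum_split_at) auto
  have low: "(\<Sum>k=1..i-1. (-1) ^ (i + k) * t k) = (\<Sum>k=1..i-1. (-1) ^ (i + k) * of_nat (DD d k))
      + (\<Sum>k=1..i-1. (-1) ^ (i + k) * (of_nat (DD d k) * (a k ^ DD d k / (z ^ DD d k - a k ^ DD d k))))"
    unfolding sum.distrib[symmetric] by (rule sum.cong[OF refl lower])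
  have ii: "(-1::complex) ^ (i + i) = 1" by (simp add: power_add[symmetric] flip: mult_2)
  obtain m where m: "i = Suc m" using i by (cases i) auto
  have tl: "(\<Sum>k=1..i-1. (-1::complex) ^ (i + k) * of_nat (DD d k)) + (-1) ^ i * of_nat (d 1)
      = - of_nat (d i)"
    using alternating_sum_DD[of m d] unfolding m by simp
  have "(-1) ^ (n - i) * ((\<Sum>k=1..n-1. (-1) ^ (n - k) * of_nat (DD d k) * z ^ DD d k
             / (z ^ DD d k - a k ^ DD d k)) + (-1) ^ n * of_nat (d 1))
      = (\<Sum>k=1..n-1. (-1) ^ (i + k) * t k) + (-1) ^ i * of_nat (d 1)"
    by (simp only: crit_sum_sign_normalised[OF i] t_def)
  also have "\<dots> = ((\<Sum>k=1..i-1. (-1) ^ (i + k) * of_nat (DD d k)) + (-1) ^ i * of_nat (d 1))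
      + t i + remainder i z"
    unfolding split low ii by (simp add: remainder_def t_def algebra_simps)
  also have "\<dots> = t i - of_nat (d i) + remainder i z" unfolding tl by simp
  finally show ?thesis by (simp add: t_def)
qed

lemma remainder_small:
  assumes i: "i \<in> {1..n-1}"
    and z: "(1 - eta) * root_scale i * cmod (a i) \<le> cmod z"
      "cmod z \<le> (1 + eta) * root_scale i * cmod (a i)"
  shows "\<And>k. k \<in> {1..n-1} - {i} \<Longrightarrow> z ^ DD d k \<noteq> a k ^ DD d k"
    and "cmod (remainder i z) \<le> 2/3 * eta"
proof -
  show "z ^ DD d k \<noteq> a k ^ DD d k" if "k \<in> {1..n-1} - {i}" for k
  proof (cases "k < i")
    case True then show ?thesis using lower_term_small(1)[OF i _ z(1), of k] that by auto
  next
    case False then show ?thesis using upper_term_small(1)[OF i _ z(2), of k] that by auto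
  qed
  define C where "C = real (2 * K) * (2 * tau)"
  have lower: "cmod ((-1) ^ (i + k) * (of_nat (DD d k) * (a k ^ DD d k / (z ^ DD d k - a k ^ DD d k))))
      \<le> C" if k: "k \<in> {1..i-1}" for k
  proof -
    have "k \<in> {1..n-1}" using k i by auto
    then have "DD d k \<le> 2 * K" by (rule DD_bounds(2))
    then have "real (DD d k) \<le> real (2 * K)" by (simp only: of_nat_le_iff)
    then show ?thesis unfolding C_def by (rule norm_sign_mult_le) (rule lower_term_small(2)[OF i k z(1)])
  qed
  have upper: "cmod ((-1) ^ (i + k) * (of_nat (DD d k) * (z ^ DD d k / (z ^ DD d k - a k ^ DD d k))))
      \<le> C" if k: "k \<in> {Suc i..n-1}" for k
  proof -
    have "k \<in> {1..n-1}" using k i by auto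
    then have "DD d k \<le> 2 * K" by (rule DD_bounds(2))
    then have "real (DD d k) \<le> real (2 * K)" by (simp only: of_nat_le_iff)
    then show ?thesis unfolding C_def by (rule norm_sign_mult_le) (rule upper_term_small(2)[OF i k z(2)])
  qed
  have "cmod (remainder i z) \<le> (\<Sum>k=1..i-1. C) + (\<Sum>k=Suc i..n-1. C)"
    unfolding remainder_def
    by (intro order_trans[OF norm_triangle_ineq] add_mono sum_norm_le lower upper) auto
  also have "\<dots> = (real (i - 1) + real (n - 1 - i)) * C" by (simp add: algebra_simps)
  also have "real (i - 1) + real (n - 1 - i) = real (n - 2)" using i by auto
  also have "real (n - 2) * C \<le> 2/3 * eta" unfolding C_def by (rule remainder_budget)
  finally show "cmod (remainder i z) \<le> 2/3 * eta" .
qed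

definition perturbation :: "nat \<Rightarrow> complex \<Rightarrow> complex" where
  "perturbation i z = remainder i z * (z ^ DD d i - a i ^ DD d i) / (of_nat (d i) * a i ^ DD d i)"

lemma perturbation_small:
  assumes i: "i \<in> {1..n-1}" and z: "z \<in> disc i j"
  shows "cmod (perturbation i z) \<le> eta"
proof -
  define D where "D = DD d i"
  define \<rho> where "\<rho> = cmod (a i)"
  define r where "r = root_scale i"
  note di = d_index_bounds[OF i]
  have \<rho>: "0 < \<rho>" using norm_a_pos[OF i] by (simp add: \<rho>_def)
  have r: "0 < r" using root_scale_pos[OF i] by (simp add: r_def)
  have "(1 + eta) ^ D \<le> 2" using eta_pos DD_eta_le[OF i] by (intro one_plus_power_le_two) (auto simp: D_def)
  have "cmod (z ^ D - a i ^ D) \<le> cmod z ^ D + \<rho> ^ D"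
    using norm_triangle_ineq4[of "z ^ D" "a i ^ D"] by (simp add: norm_power \<rho>_def)
  also have "cmod z ^ D \<le> ((1 + eta) * r * \<rho>) ^ D"
    using norm_in_disc(2)[OF z] by (intro power_mono) (auto simp: r_def \<rho>_def)
  also have "((1 + eta) * r * \<rho>) ^ D \<le> 2 * r ^ D * \<rho> ^ D"
    using \<open>(1 + eta) ^ D \<le> 2\<close> r \<rho> by (simp add: power_mult_distrib mult_right_mono)
  finally have "cmod (z ^ D - a i ^ D) \<le> (2 * (real (d i) / real (d (Suc i))) + 1) * \<rho> ^ D"
    using root_scale_power[OF i] by (simp add: r_def D_def algebra_simps)
  then have "cmod (z ^ D - a i ^ D) / (real (d i) * \<rho> ^ D)
      \<le> (2 * (real (d i) / real (d (Suc i))) + 1) * \<rho> ^ D / (real (d i) * \<rho> ^ D)"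
    using di \<rho> by (intro divide_right_mono) auto
  also have "\<dots> = 2 / real (d (Suc i)) + 1 / real (d i)" using di \<rho> by (simp add: field_simps)
  also have "\<dots> \<le> 1 + 1/2"
    using di by (intro add_mono) (simp_all add: divide_le_eq)
  finally have frac: "cmod (z ^ D - a i ^ D) / (real (d i) * \<rho> ^ D) \<le> 3/2" by simp
  have "cmod (perturbation i z) = cmod (remainder i z) * (cmod (z ^ D - a i ^ D) / (real (d i) * \<rho> ^ D))"
    by (simp add: perturbation_def D_def \<rho>_def norm_mult norm_divide norm_power)
  also have "\<dots> \<le> (2/3 * eta) * (3/2)"
    using remainder_small(2)[OF i norm_in_disc[OF z]] frac eta_pos \<rho> by (intro mult_mono) auto
  finally show ?thesis by simp
qed

lemma perturbation_continuous:
  assumes i: "i \<in> {1..n-1}"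
  shows "continuous_on (disc i j) (perturbation i)"
proof -
  have nz: "z ^ DD d k - a k ^ DD d k \<noteq> 0" if "z \<in> disc i j" "k \<in> {1..n-1} - {i}" for z k
    using remainder_small(1)[OF i norm_in_disc[OF that(1)] that(2)] by simp
  have nz_lower: "z ^ DD d k - a k ^ DD d k \<noteq> 0" if "z \<in> disc i j" "k \<in> {1..i-1}" for z k
    using that i by (intro nz) auto
  have nz_upper: "z ^ DD d k - a k ^ DD d k \<noteq> 0" if "z \<in> disc i j" "k \<in> {Suc i..n-1}" for z k
    using that i by (intro nz) auto
  have "continuous_on (disc i j) (remainder i)"
    unfolding remainder_def by (intro continuous_intros) (use nz_lower nz_upper in blast)+
  then show ?thesis
    unfolding perturbation_def using norm_a_pos[OF i] d_index_bounds[OF i]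
    by (intro continuous_intros) auto
qed

text \<open>The logarithm L keeps track of the argument of z, which separates the points for equal i.\<close>

definition near_critical :: "nat \<Rightarrow> nat \<Rightarrow> complex \<Rightarrow> bool" where
  "near_critical i j z \<longleftrightarrow> z \<in> disc i j \<and> crit_eq n d a z \<and>
     (\<exists>L. cmod L \<le> 1 \<and> z = approx_root i j * exp (L / of_nat (DD d i)))"

lemma near_critical_exists:
  assumes i: "i \<in> {1..n-1}" and j: "1 \<le> j"
  shows "\<exists>z. near_critical i j z"
proof -
  define c where "c = approx_root i j"
  have c0: "c \<noteq> 0"
    using norm_approx_root[of i j] root_scale_pos[OF i] norm_a_pos[OF i] by (auto simp: c_def)
  obtain z L where z: "z \<in> disc i j" and zD: "z ^ DD d i = c ^ DD d i * (1 + perturbation i z)"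
    and zL: "z = c * exp (L / of_nat (DD d i))" and L: "cmod L \<le> 2 * eta"
    using perturbed_power_root[OF DD_bounds(1)[OF i] c0 eta_pos eta_le_quarter
        perturbation_continuous[OF i, of j, folded c_def]
        perturbation_small[OF i, where j = j, folded c_def]]
    unfolding c_def by blast
  have "- Re (perturbation i z) \<le> cmod (perturbation i z)"
    using abs_Re_le_cmod[of "perturbation i z"] by linarith
  then have Re_w: "-1 < Re (perturbation i z)"
    using perturbation_small[OF i z] eta_le_quarter by simp
  note di = d_index_bounds[OF i]
  have d0: "0 < d i" "0 < d (Suc i)" "a i ^ DD d i \<noteq> 0" using di norm_a_pos[OF i] by auto
  note main = perturbed_power_equation[OF d0 approx_root_power[OF i j, folded c_def] zD
      perturbation_def Re_w]
  have nz_all: "z ^ DD d k \<noteq> a k ^ DD d k" if "k \<in> {1..n-1}" for k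
    using remainder_small(1)[OF i norm_in_disc[OF z], of k] main(1) that by (cases "k = i") auto
  have nz: "z ^ DD d k \<noteq> a k ^ DD d k" if "k \<in> {1..i-1}" for k
    using nz_all that i by auto
  have "crit_eq n d a z"
    unfolding crit_eq_def using nz_all crit_sum_decomposition[OF i nz] main(2) by (simp add: DD_def)
  moreover have "cmod L \<le> 1" using L eta_le_quarter by simp
  ultimately show ?thesis using z zL unfolding near_critical_def c_def by blast
qed

lemma near_critical_close:
  assumes i: "i \<in> {1..n-1}" and z: "near_critical i j z"
  shows "z \<noteq> 0" and "cmod (z - approx_root i j) < u powr (2 / real K) * cmod (a i)"
proof -
  have disc: "z \<in> disc i j" using z by (simp add: near_critical_def)
  have "0 < real K powr (-1/4) / 2 * cmod (a i)" using norm_a_pos[OF i] K_ge_3 by simp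
  then show "z \<noteq> 0" using norm_in_disc_K_bounds(1)[OF i disc] by auto
  have "real K powr (1/4) \<le> real K" using K_ge_3 powr_mono[of "1/4" 1 "real K"] by simp
  then have "root_scale i / (2 * real K) < 1"
    using root_scale_bounds(2)[OF i] K_ge_3 by (simp add: field_simps)
  then have "u powr (2 / real K) * (root_scale i / (2 * real K)) * cmod (a i)
      < u powr (2 / real K) * 1 * cmod (a i)"
    using u_pos norm_a_pos[OF i] by (intro mult_strict_right_mono mult_strict_left_mono) auto
  then have "eta * cmod (approx_root i j) < u powr (2 / real K) * cmod (a i)"
    using K_ge_3 by (simp add: eta_def norm_approx_root field_simps)
  moreover have "cmod (z - approx_root i j) \<le> eta * cmod (approx_root i j)"
    using disc norm_minus_commute[of z] unfolding mem_cball dist_norm by simp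
  ultimately show "cmod (z - approx_root i j) < u powr (2 / real K) * cmod (a i)" by simp
qed

lemma discs_separated:
  assumes "1 \<le> i" "i < i'" "i' \<le> n - 1" "z \<in> disc i j" "z' \<in> disc i' j'"
  shows "cmod z < cmod z'"
proof -
  have i: "i \<in> {1..n-1}" and i': "i' \<in> {1..n-1}" using assms by auto
  have "cmod z \<le> 2 * real K powr (1/4) * cmod (a i)" using norm_in_disc_K_bounds(2)[OF i assms(4)] .
  also have "\<dots> \<le> 2 * real K powr (1/4) * (real K powr (-2) * cmod (a i'))"
    using norm_a_gap[OF assms(1-3)] by (intro mult_left_mono) auto
  also have "\<dots> < real K powr (-1/4) / 2 * cmod (a i')"
    using powr_quarter_separation[of "real K"] K_ge_3 norm_a_pos[OF i']
    by (simp add: mult.assoc[symmetric] mult_strict_right_mono)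
  also have "\<dots> \<le> cmod z'" using norm_in_disc_K_bounds(1)[OF i' assms(5)] .
  finally show ?thesis .
qed

lemma near_critical_index_unique:
  assumes i: "i \<in> {1..n-1}" "j \<in> {1..DD d i}" and i': "i' \<in> {1..n-1}" "j' \<in> {1..DD d i'}"
    and z: "near_critical i j z" "near_critical i' j' z"
  shows "i = i' \<and> j = j'"
proof -
  have disc: "z \<in> disc i j" "z \<in> disc i' j'" using z by (simp_all add: near_critical_def)
  have ii': "i = i'"
  proof (rule ccontr)
    assume "i \<noteq> i'"
    then consider "i < i'" | "i' < i" by linarith
    then show False
    proof cases
      case 1 then show False using discs_separated[OF _ 1 _ disc] i(1) i'(1) by auto
    next
      case 2 then show False using discs_separated[OF _ 2 _ disc(2,1)] i(1) i'(1) by auto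
    qed
  qed
  obtain L L' where L: "cmod L \<le> 1" "z = approx_root i j * exp (L / of_nat (DD d i))"
    and L': "cmod L' \<le> 1" "z = approx_root i j' * exp (L' / of_nat (DD d i))"
    using z unfolding ii'[symmetric] near_critical_def by blast
  have b: "complex_of_real (root_scale i) * a i \<noteq> 0"
    using root_scale_pos[OF i(1)] norm_a_pos[OF i(1)] by auto
  have "j = j'"
    by (rule rotation_index_unique[where D = "DD d i", OF _ b _ _ _ _ L(1) L'(1)])
       (use i i' ii' DD_bounds[OF i(1)] L(2) L'(2) in \<open>auto simp: approx_root_def\<close>)
  with ii' show ?thesis by simp
qed

lemma critical_points:
  "\<exists>w :: nat \<times> nat \<Rightarrow> complex.
     (\<forall>i\<in>{1..n-1}. \<forall>j\<in>{1..DD d i}. w (i, j) \<noteq> 0 \<and> crit_eq n d a (w (i, j)) \<and>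
        cmod (w (i, j) - approx_root i j) < u powr (2 / real K) * cmod (a i))
     \<and> inj_on w {(i, j). i \<in> {1..n-1} \<and> j \<in> {1..DD d i}}"
proof -
  define w where "w = (\<lambda>(i, j). SOME z. near_critical i j z)"
  have w: "near_critical i j (w (i, j))" if "i \<in> {1..n-1}" "j \<in> {1..DD d i}" for i j
    using near_critical_exists[of i j] that unfolding w_def by (auto intro: someI_ex)
  have "w (i, j) \<noteq> 0 \<and> crit_eq n d a (w (i, j))
      \<and> cmod (w (i, j) - approx_root i j) < u powr (2 / real K) * cmod (a i)"
    if "i \<in> {1..n-1}" "j \<in> {1..DD d i}" for i j
    using near_critical_close[OF that(1) w[OF that]] w[OF that] by (simp add: near_critical_def)
  moreover have "inj_on w {(i, j). i \<in> {1..n-1} \<and> j \<in> {1..DD d i}}"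
  proof (rule inj_onI)
    fix p q assume "p \<in> {(i, j). i \<in> {1..n-1} \<and> j \<in> {1..DD d i}}"
      and "q \<in> {(i, j). i \<in> {1..n-1} \<and> j \<in> {1..DD d i}}" and eq: "w p = w q"
    then obtain i j i' j' where p: "p = (i, j)" "i \<in> {1..n-1}" "j \<in> {1..DD d i}"
      and q: "q = (i', j')" "i' \<in> {1..n-1}" "j' \<in> {1..DD d i'}" by auto
    show "p = q"
      using near_critical_index_unique[OF p(2,3) q(2,3) w[OF p(2,3)]] w[OF q(2,3)] eq
      by (simp add: p(1) q(1))
  qed
  ultimately show ?thesis by blast
qed

end

theorem lemma2p3:
  fixes p n :: nat and d :: "nat \<Rightarrow> nat" and a :: "nat \<Rightarrow> complex"
    and s u v \<xi> :: real and K :: nat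
  assumes hp: "p \<in> {0, 1}"
    and hn: "n \<ge> 2"
    and hd: "\<forall>i\<in>{1..n}. d i > 0"
    and hxi: "\<xi> = (\<Sum>i=1..n. 1 / real (d i))"
    and hxi1: "\<xi> < 1"
    and hK: "K = Max (d ` {1..n})"
    and hp1: "p = 1 \<Longrightarrow>
        0 < s \<and> s \<le> min (real K powr (- 5 * \<xi> / (1 - \<xi>))) (real K powr (5 - 2 * real K))
        \<and> u = s * real K powr (-5) \<and> v = s * real K powr (-2)"
    and hp0: "p = 0 \<Longrightarrow>
        0 < s \<and> s \<le> min (min
           (2 powr (- (1 / (1 - \<xi>)) * (1 / (1 + 1 / real (d n) - 2 * \<xi> / 3))))
           ((4 * real K) powr (- 3 / (1 - \<xi>))))
           (real K powr (- 2 * real K / (1 + 1 / real (d n) + 2 * (1 - \<xi>) / 3)))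
        \<and> u = s powr (1 + 1 / real (d n) + 2 * (1 - \<xi>) / 3)
        \<and> v = s powr (1 / real (d n) + (1 - \<xi>) / 3)"
    and ha_last: "cmod (a (n - 1)) = v powr (1 / real (d n))"
    and ha: "\<forall>i\<in>{1..n-2}. cmod (a i) = u powr (1 / real (d (Suc i))) * cmod (a (Suc i))"
  shows "\<exists>w :: nat \<times> nat \<Rightarrow> complex.
     (\<forall>i\<in>{1..n-1}. \<forall>j\<in>{1..DD d i}.
        w (i, j) \<noteq> 0 \<and> crit_eq n d a (w (i, j)) \<and>
        cmod (w (i, j) -
              complex_of_real ((real (d i) / real (d (Suc i))) powr (1 / real (DD d i))) * a i
              * exp (complex_of_real pi * \<i> * of_real ((2 * real j - 1) / real (DD d i))))
          < u powr (2 / real K) * cmod (a i))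
     \<and> inj_on w {(i, j). i \<in> {1..n-1} \<and> j \<in> {1..DD d i}}"
proof -
  have d_le: "d i \<le> K" if "i \<in> {1..n}" for i
    unfolding hK using that by (intro Max_ge) auto
  have d_ge: "2 \<le> d i" if "i \<in> {1..n}" for i
    using that hd hxi hxi1 by (intro two_le_of_sum_inverse_less_one[of "{1..n}"]) auto
  have K0: "0 < K" using d_ge[of n] d_le[of n] hn by simp
  have "card {1..n} < K"
    using hd d_le K0 hxi hxi1 by (intro card_less_of_sum_inverse_less_one[where d = d]) auto
  then have nK: "n < K" by simp
  have u: "0 < u \<and> u \<le> real K powr (- 2 * real K) \<and> v \<noteq> 0"
  proof (cases "p = 1")
    case True
    then have "u \<le> real K powr (5 - 2 * real K) * real K powr (-5)"
      using hp1 by (auto intro: mult_right_mono)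
    with True hp1 K0 show ?thesis by (simp add: powr_add[symmetric])
  next
    case False
    with hp have "p = 0" by auto
    then have s: "0 < s" "s \<le> real K powr (- 2 * real K / (1 + 1 / real (d n) + 2 * (1 - \<xi>) / 3))"
      and uv: "u = s powr (1 + 1 / real (d n) + 2 * (1 - \<xi>) / 3)"
        "v = s powr (1 / real (d n) + (1 - \<xi>) / 3)"
      using hp0 by auto
    have "0 < 1 + 1 / real (d n) + 2 * (1 - \<xi>) / 3" using hxi1 by (simp add: add_pos_nonneg)
    from powr_le_of_le_powr_divide[OF s this] s(1) show ?thesis unfolding uv by simp
  qed
  interpret critical_setup n K d a u
    using hn d_ge d_le nK u ha_last ha by unfold_locales auto
  show ?thesis using critical_points by (simp only: approx_root_def root_scale_def)
qed

end
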